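(* Let $p\in\mathbb{N}$ and let $C_1,\dots,C_p$ be bivariate copulas satisfying the standing assumption, and set $C_k=C^\perp$ (the independence copula $C^\perp(u,v)=uv$) for $k>p$. Then for all $k>p$ and $(\mathbf{u},x)\in(0,1)^k\times(0,1)$, the forward Rosenblatt functions satisfy $R_k(\mathbf{u},x)=R_p(\mathbf{u}_{[k-p+1,k]},x)$. Consequently, if $(Z_k)_{k\in\mathbb{N}}$ are iid standard uniform, $U_1=Z_1$ and $U_k=R_{k-1}^{-1}((U_1,\dots,U_{k-1})^\top,Z_k)$ for $k\ge2$, then $U_k=R_p^{-1}((U_{k-p},\dots,U_{k-1})^\top,Z_k)$ for all $k>p$.
   Context: Standing assumption: each $C_k$ is $C^\infty$ on $(0,1)^2$ with density strictly positive on $(0,1)^2$. Write $h_k^{(1)}=\partial C_k/\partial u_1$, $h_k^{(2)}=\partial C_k/\partial u_2$; for $\mathbf{u}=(u_1,\dots,u_k)^\top$, $\mathbf{u}_{-i}$ is $\mathbf{u}$ without its $i$th component and $\mathbf{u}_{[a,b]}=(u_a,\dots,u_b)^\top$. Rosenblatt functions: $R^{(1)}_1(u,x)=h_1^{(1)}(u,x)$, $R^{(2)}_1(u,x)=h_1^{(2)}(x,u)$, and for $k\ge2$ $R^{(1)}_k(\mathbf{u},x)=h_k^{(1)}(R^{(2)}_{k-1}(\mathbf{u}_{-1},u_1),R^{(1)}_{k-1}(\mathbf{u}_{-1},x))$, $R^{(2)}_k(\mathbf{u},x)=h_k^{(2)}(R^{(2)}_{k-1}(\mathbf{u}_{-k},x),R^{(1)}_{k-1}(\mathbf{u}_{-k},u_k))$.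 $R_k:=R^{(1)}_k$, and $R_k^{-1}(\mathbf{u},\cdot)$ is the inverse of the bijection $x\mapsto R_k(\mathbf{u},x)$ of $(0,1)$. *)

theory Defs
  imports "HOL-Probability.Probability"
begin

definition copula :: "(real \<Rightarrow> real \<Rightarrow> real) \<Rightarrow> bool" where
  "copula C \<longleftrightarrow>
     (\<forall>u\<in>{0..1}. C u 0 = 0 \<and> C 0 u = 0 \<and> C u 1 = u \<and> C 1 u = u) \<and>
     (\<forall>u1\<in>{0..1}. \<forall>u2\<in>{0..1}. \<forall>v1\<in>{0..1}. \<forall>v2\<in>{0..1}.
        u1 \<le> u2 \<longrightarrow> v1 \<le> v2 \<longrightarrow> C u2 v2 - C u2 v1 - C u1 v2 + C u1 v1 \<ge> 0)"

text \<open>Iterated partial derivatives: True = derivative in the first argument, False = in the second.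
  The head of the list is the last derivative taken.\<close>
fun pd :: "bool list \<Rightarrow> (real \<Rightarrow> real \<Rightarrow> real) \<Rightarrow> real \<Rightarrow> real \<Rightarrow> real" where
  "pd [] f = f"
| "pd (True # ds) f = (\<lambda>u v. deriv (\<lambda>s. pd ds f s v) u)"
| "pd (False # ds) f = (\<lambda>u v. deriv (\<lambda>t. pd ds f u t) v)"

definition open_square :: "(real \<times> real) set" where
  "open_square = {0<..<1} \<times> {0<..<1}"

definition smooth_on_square :: "(real \<Rightarrow> real \<Rightarrow> real) \<Rightarrow> bool" where
  "smooth_on_square f \<longleftrightarrow>
     (\<forall>ds. continuous_on open_square (\<lambda>(u, v). pd ds f u v) \<and>
        (\<forall>(u, v)\<in>open_square. (\<lambda>s. pd ds f s v) differentiable (at u) \<and>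
                               (\<lambda>t. pd ds f u t) differentiable (at v)))"

definition standing_assumption :: "(real \<Rightarrow> real \<Rightarrow> real) \<Rightarrow> bool" where
  "standing_assumption C \<longleftrightarrow> smooth_on_square C \<and>
     (\<forall>(u, v)\<in>open_square. pd [True, False] C u v > 0)"

definition h1 :: "(real \<Rightarrow> real \<Rightarrow> real) \<Rightarrow> real \<Rightarrow> real \<Rightarrow> real" where
  "h1 C u v = deriv (\<lambda>s. C s v) u"

definition h2 :: "(real \<Rightarrow> real \<Rightarrow> real) \<Rightarrow> real \<Rightarrow> real \<Rightarrow> real" where
  "h2 C u v = deriv (\<lambda>t. C u t) v"

definition indep_copula :: "real \<Rightarrow> real \<Rightarrow> real" where
  "indep_copula u v = u * v"

text \<open>Rosenblatt functions R^(1)_k, R^(2)_k for the copula sequence C (indexed from 1);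
  vectors u in (0,1)^k are lists of length k. The case k = 0 is an unused convention.\<close>
fun R1 :: "(nat \<Rightarrow> real \<Rightarrow> real \<Rightarrow> real) \<Rightarrow> nat \<Rightarrow> real list \<Rightarrow> real \<Rightarrow> real"
and R2 :: "(nat \<Rightarrow> real \<Rightarrow> real \<Rightarrow> real) \<Rightarrow> nat \<Rightarrow> real list \<Rightarrow> real \<Rightarrow> real" where
  "R1 C 0 u x = x"
| "R1 C (Suc 0) u x = h1 (C 1) (hd u) x"
| "R1 C (Suc (Suc k)) u x =
     h1 (C (Suc (Suc k))) (R2 C (Suc k) (tl u) (hd u)) (R1 C (Suc k) (tl u) x)"
| "R2 C 0 u x = x"
| "R2 C (Suc 0) u x = h2 (C 1) x (hd u)"
| "R2 C (Suc (Suc k)) u x =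
     h2 (C (Suc (Suc k))) (R2 C (Suc k) (butlast u) x) (R1 C (Suc k) (butlast u) (last u))"

definition Rinv :: "(nat \<Rightarrow> real \<Rightarrow> real \<Rightarrow> real) \<Rightarrow> nat \<Rightarrow> real list \<Rightarrow> real \<Rightarrow> real" where
  "Rinv C k u z = (THE y. y \<in> {0<..<1} \<and> R1 C k u y = z)"

end

theory Submission
  imports Defs
begin

text \<open>Under the independence copula the h-function forgets its conditioning argument,
  so each step of the Rosenblatt recursion beyond p only drops the oldest coordinate.
  The statement about the sequence U then holds pointwise in \<omega>.\<close>

lemma h1_indep_copula [simp]: "h1 indep_copula u v = v"
  unfolding h1_def indep_copula_def
  by (rule DERIV_imp_deriv) (auto intro!: derivative_eq_intros)

lemma R1_Suc_indep_copula:
  assumes "k \<ge> 1" and "C (Suc k) = indep_copula"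
  shows "R1 C (Suc k) u x = R1 C k (tl u) x"
  using assms by (cases k) auto

lemma R1_drop_indep_copula:
  assumes "p \<ge> 1" and indep: "\<And>k. k > p \<Longrightarrow> C k = indep_copula" and "p \<le> k"
  shows "R1 C k u x = R1 C p (drop (k - p) u) x"
  using \<open>p \<le> k\<close>
proof (induction k arbitrary: u rule: dec_induct)
  case base
  then show ?case by simp
next
  case (step k)
  have "R1 C (Suc k) u x = R1 C k (tl u) x"
    using step.hyps \<open>p \<ge> 1\<close> indep[of "Suc k"] by (simp add: R1_Suc_indep_copula)
  also have "\<dots> = R1 C p (drop (Suc k - p) u) x"
    using step.IH step.hyps by (simp add: Suc_diff_le drop_Suc)
  finally show ?case .
qed

lemma Rinv_drop_indep_copula:
  assumes "p \<ge> 1" and "\<And>k. k > p \<Longrightarrow> C k = indep_copula" and "p \<le> k"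
  shows "Rinv C k u z = Rinv C p (drop (k - p) u) z"
  unfolding Rinv_def using R1_drop_indep_copula[OF assms] by simp

theorem mainTheorem4:
  fixes C :: "nat \<Rightarrow> real \<Rightarrow> real \<Rightarrow> real"
    and p :: nat
    and M :: "'a measure"
    and Z U :: "nat \<Rightarrow> 'a \<Rightarrow> real"
  assumes p_pos: "p \<ge> 1"
    and cop: "\<And>k. 1 \<le> k \<Longrightarrow> k \<le> p \<Longrightarrow> copula (C k) \<and> standing_assumption (C k)"
    and indep: "\<And>k. k > p \<Longrightarrow> C k = indep_copula"
    and M: "prob_space M"
    and Z_meas: "\<And>k. k \<ge> 1 \<Longrightarrow> Z k \<in> borel_measurable M"
    and Z_indep: "prob_space.indep_vars M (\<lambda>_. borel) Z {1..}"
    and Z_unif: "\<And>k. k \<ge> 1 \<Longrightarrow> distr M borel (Z k) = uniform_measure lborel {0..1}"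
    and U1: "U 1 = Z 1"
    and Uk: "\<And>k \<omega>. k \<ge> 2 \<Longrightarrow> \<omega> \<in> space M \<Longrightarrow>
               U k \<omega> = Rinv C (k - 1) (map (\<lambda>i. U i \<omega>) [1..<k]) (Z k \<omega>)"
  shows "(\<forall>k > p. \<forall>u x. length u = k \<and> set u \<subseteq> {0<..<1} \<and> x \<in> {0<..<1} \<longrightarrow>
            R1 C k u x = R1 C p (drop (k - p) u) x)
       \<and> (\<forall>k > p. \<forall>\<omega>\<in>space M.
            U k \<omega> = Rinv C p (map (\<lambda>i. U i \<omega>) [k - p..<k]) (Z k \<omega>))"
proof -
  have "U k \<omega> = Rinv C p (map (\<lambda>i. U i \<omega>) [k - p..<k]) (Z k \<omega>)"
    if "k > p" and "\<omega> \<in> space M" for k \<omega>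
  proof -
    have "U k \<omega> = Rinv C (k - 1) (map (\<lambda>i. U i \<omega>) [1..<k]) (Z k \<omega>)"
      using Uk that p_pos by simp
    also have "\<dots> = Rinv C p (drop (k - 1 - p) (map (\<lambda>i. U i \<omega>) [1..<k])) (Z k \<omega>)"
      using that by (intro Rinv_drop_indep_copula[OF p_pos indep]) auto
    also have "drop (k - 1 - p) (map (\<lambda>i. U i \<omega>) [1..<k]) = map (\<lambda>i. U i \<omega>) [k - p..<k]"
      using that by (simp add: drop_map Suc_diff_Suc)
    finally show ?thesis .
  qed
  moreover have "R1 C k u x = R1 C p (drop (k - p) u) x" if "k > p" for k u x
    using that by (intro R1_drop_indep_copula[OF p_pos indep]) auto
  ultimately show ?thesis by blast
qed

end
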